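(* Let $m\ge2$. There exist constants $\alpha,c>0$ and $d\ge0$, depending only on $m$ and $n$, such that for all $A_1,\dots,A_m\in\mathcal{P}$, $$\mathrm{tr}(A_1A_2^{-1})+\mathrm{tr}(A_2A_3^{-1})+\dots+\mathrm{tr}(A_{m-1}A_m^{-1})\ge c\,\mathrm{tr}(A_1^\alpha A_m^{-\alpha})-d.$$
   Context: $\mathcal{P}$ is the space of positive definite $n\times n$ real symmetric matrices, with $n$ fixed; powers $A^\alpha$ are defined by functional calculus. *)

theory Defs
  imports "HOL-Analysis.Analysis"
begin

definition pos_def :: "real^'n^'n \<Rightarrow> bool" where
  "pos_def A \<longleftrightarrow> transpose A = A \<and> (\<forall>x. x \<noteq> 0 \<longrightarrow> x \<bullet> (A *v x) > 0)"

definition diag_mat :: "real^'n \<Rightarrow> real^'n^'n" where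
  "diag_mat d = (\<chi> i j. if i = j then d $ i else 0)"

definition mat_powr :: "real^'n^'n \<Rightarrow> real \<Rightarrow> real^'n^'n" where
  "mat_powr A a = (SOME B. \<exists>Q l. orthogonal_matrix Q \<and>
      A = Q ** diag_mat l ** transpose Q \<and>
      B = Q ** diag_mat (\<chi> i. (l $ i) powr a) ** transpose Q)"

end

theory Submission
  imports Defs
begin

text \<open>If B = Q diag(l) Q^T and C = Q^T A Q, then C_ij^2 <= C_ii C_jj and AM-GM give
  x^T C x <= (sum_i C_ii / l_i) (sum_i l_i x_i^2), that is A <= tr(A B^-1) B in the Loewner order.
  Chaining this along A_1, ..., A_m yields A_1 <= T A_m, where T is the product of the m - 1 traces
  t_i = tr(A_i A_(i+1)^-1). Since X^2 <= Y^2 implies X <= Y for symmetric X and positive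
  semidefinite Y, taking square roots m times gives A_1^a <= T^a A_m^a for a = 2^-m, hence
  tr(A_1^a A_m^-a) <= n T^a. Finally T^a <= (1 + sum_i t_i)^((m-1) a) <= 1 + sum_i t_i because
  (m - 1) 2^-m <= 1, so c = 1/n and d = 1 work.\<close>

section \<open>Quadratic forms and the Loewner order\<close>

definition quad_form :: "real^'n^'n \<Rightarrow> real^'n \<Rightarrow> real" where
  "quad_form M x = x \<bullet> (M *v x)"

definition loewner_le :: "real^'n^'n \<Rightarrow> real^'n^'n \<Rightarrow> bool" where
  "loewner_le A B \<longleftrightarrow> (\<forall>x. quad_form A x \<le> quad_form B x)"

lemma inner_matrix_vector_transpose:
  fixes A :: "real^'n^'m"
  shows "x \<bullet> (A *v y) = (transpose A *v x) \<bullet> y"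
  by (metis dot_lmul_matrix transpose_matrix_vector)

lemma symmetric_matrix_inner_commute:
  fixes A :: "real^'n^'n"
  assumes "transpose A = A"
  shows "x \<bullet> (A *v y) = (A *v x) \<bullet> y"
  using inner_matrix_vector_transpose[of x A y] assms by simp

lemma inner_axis_matrix_axis: "axis i 1 \<bullet> (C *v axis j 1) = C $ i $ j"
  by (simp add: matrix_vector_mult_basis inner_axis' column_def)

lemma quad_form_scaleR: "quad_form (c *\<^sub>R A) x = c * quad_form A x"
  by (simp add: quad_form_def scaleR_matrix_vector_assoc[symmetric])

lemma quad_form_diff: "quad_form (A - B) x = quad_form A x - quad_form B x"
  by (simp add: quad_form_def matrix_vector_mult_diff_rdistrib inner_diff_right)

lemma quad_form_conj:
  fixes P :: "real^'m^'n" and A :: "real^'m^'m"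
  shows "quad_form (P ** A ** transpose P) x = quad_form A (transpose P *v x)"
  by (simp add: quad_form_def inner_matrix_vector_transpose[of x P] matrix_vector_mul_assoc[symmetric])

lemma quad_form_axis: "quad_form C (axis i 1) = C $ i $ i"
  by (simp add: quad_form_def inner_axis_matrix_axis)

lemma quad_form_double_sum: "quad_form C y = (\<Sum>i\<in>UNIV. \<Sum>j\<in>UNIV. C$i$j * y$i * y$j)"
  by (simp add: quad_form_def inner_vec_def matrix_vector_mult_def sum_distrib_left algebra_simps)

lemma quad_form_symmetric_square:
  fixes X :: "real^'n^'n"
  assumes "transpose X = X"
  shows "quad_form (X ** X) v = (X *v v) \<bullet> (X *v v)"
  by (simp add: quad_form_def symmetric_matrix_inner_commute[OF assms] matrix_vector_mul_assoc[symmetric])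

lemma loewner_le_refl: "loewner_le A A"
  by (simp add: loewner_le_def)

lemma loewner_le_trans [trans]: "loewner_le A B \<Longrightarrow> loewner_le B C \<Longrightarrow> loewner_le A C"
  unfolding loewner_le_def by (meson order_trans)

lemma loewner_le_scaleR: "0 \<le> c \<Longrightarrow> loewner_le A B \<Longrightarrow> loewner_le (c *\<^sub>R A) (c *\<^sub>R B)"
  by (simp add: loewner_le_def quad_form_scaleR mult_left_mono)

lemma loewner_le_conj:
  fixes P :: "real^'m^'n"
  shows "loewner_le A B \<Longrightarrow> loewner_le (P ** A ** transpose P) (P ** B ** transpose P)"
  by (simp add: loewner_le_def quad_form_conj)

section \<open>Spectral theorem for real symmetric matrices\<close>

lemma quadratic_nonneg_imp_discrim_nonpos:
  fixes a b c :: real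
  assumes "0 \<le> a" and nonneg: "\<And>t. 0 \<le> a * t^2 + b * t + c"
  shows "b^2 \<le> 4 * a * c"
proof (cases "a = 0")
  case True
  have "b = 0"
  proof (rule ccontr)
    assume "b \<noteq> 0"
    with True nonneg[of "- (c + 1) / b"] show False by simp
  qed
  with True show ?thesis by simp
next
  case False
  with \<open>0 \<le> a\<close> have "0 < a" by simp
  have "0 \<le> a * (- b / (2 * a))^2 + b * (- b / (2 * a)) + c" by (rule nonneg)
  also have "\<dots> = c - b^2 / (4 * a)" using False by (simp add: field_simps power2_eq_square)
  finally show ?thesis using \<open>0 < a\<close> by (simp add: field_simps)
qed

lemma quad_form_cauchy_schwarz:
  fixes C :: "real^'n^'n"
  assumes sym: "transpose C = C" and S: "subspace S"
    and psd: "\<And>z. z \<in> S \<Longrightarrow> 0 \<le> quad_form C z" and "x \<in> S" "y \<in> S"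
  shows "(x \<bullet> (C *v y))^2 \<le> quad_form C x * quad_form C y"
proof -
  have "0 \<le> quad_form C x * t^2 + 2 * (x \<bullet> (C *v y)) * t + quad_form C y" for t
  proof -
    have "t *\<^sub>R x + y \<in> S" using assms by (simp add: subspace_add subspace_scale)
    then have "0 \<le> quad_form C (t *\<^sub>R x + y)" by (rule psd)
    also have "\<dots> = quad_form C x * t^2 + 2 * (x \<bullet> (C *v y)) * t + quad_form C y"
    proof -
      have "y \<bullet> (C *v x) = x \<bullet> (C *v y)"
        using symmetric_matrix_inner_commute[OF sym, of y x] by (simp add: inner_commute)
      then show ?thesis
        by (simp add: quad_form_def power2_eq_square algebra_simps)
    qed
    finally show ?thesis .
  qed
  from quadratic_nonneg_imp_discrim_nonpos[OF psd[OF \<open>x \<in> S\<close>] this]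
  show ?thesis by (simp add: power2_eq_square)
qed

lemma rayleigh_maximizer_is_eigenvector:
  fixes A :: "real^'n^'n"
  assumes sym: "transpose A = A" and S: "subspace S" and inv: "\<And>x. x \<in> S \<Longrightarrow> A *v x \<in> S"
    and v: "v \<in> S" "v \<bullet> v = 1"
    and max: "\<And>y. y \<in> S \<Longrightarrow> quad_form A y \<le> quad_form A v * (y \<bullet> y)"
  shows "A *v v = quad_form A v *\<^sub>R v"
proof -
  \<comment> \<open>The form of C is semidefinite on S and vanishes at v, so Cauchy-Schwarz forces C v = 0.\<close>
  define C where "C = quad_form A v *\<^sub>R mat 1 - A"
  have C_mult: "C *v x = quad_form A v *\<^sub>R x - A *v x" for x
    by (simp add: C_def matrix_vector_mult_diff_rdistrib scaleR_matrix_vector_assoc[symmetric])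
  have sym_C: "transpose C = C"
    using sym by (simp add: C_def transpose_def vec_eq_iff mat_def)
  have quad_C: "quad_form C x = quad_form A v * (x \<bullet> x) - quad_form A x" for x
    by (simp add: quad_form_def C_mult inner_diff_right)
  define w where "w = C *v v"
  have w: "w \<in> S" using S v inv by (simp add: w_def C_mult subspace_diff subspace_scale)
  have "(v \<bullet> (C *v w))^2 \<le> quad_form C v * quad_form C w"
    by (rule quad_form_cauchy_schwarz[OF sym_C S _ v(1) w]) (simp add: quad_C max)
  also have "quad_form C v = 0" using v by (simp add: quad_C)
  finally have "w \<bullet> w = 0"
    using symmetric_matrix_inner_commute[OF sym_C, of v w] by (simp add: w_def)
  then show ?thesis by (simp add: w_def C_mult)
qed

lemma symmetric_matrix_eigenvector_in_subspace:
  fixes A :: "real^'n^'n"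
  assumes sym: "transpose A = A" and S: "subspace S" and inv: "\<And>x. x \<in> S \<Longrightarrow> A *v x \<in> S"
    and nontrivial: "S \<noteq> {0}"
  shows "\<exists>v\<in>S. norm v = 1 \<and> A *v v = quad_form A v *\<^sub>R v"
proof -
  let ?K = "S \<inter> sphere 0 1"
  obtain x where x: "x \<in> S" "x \<noteq> 0" using nontrivial S subspace_0 by blast
  then have "x /\<^sub>R norm x \<in> ?K" using S by (simp add: subspace_scale)
  moreover have "compact ?K"
    by (metis Int_commute closed_subspace compact_Int_closed compact_sphere S)
  moreover have "continuous_on ?K (quad_form A)"
    unfolding quad_form_def by (intro continuous_intros linear_continuous_on matrix_vector_mul_linear)
  ultimately obtain v where v: "v \<in> ?K" and v_max: "\<And>y. y \<in> ?K \<Longrightarrow> quad_form A y \<le> quad_form A v"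
    using continuous_attains_sup[of ?K "quad_form A"] by blast
  have "quad_form A y \<le> quad_form A v * (y \<bullet> y)" if "y \<in> S" for y
  proof (cases "y = 0")
    case False
    have "y /\<^sub>R norm y \<in> ?K" using False S that by (simp add: subspace_scale)
    moreover have "quad_form A (y /\<^sub>R norm y) = quad_form A y / (norm y)^2"
      by (simp add: quad_form_def matrix_vector_mult_scaleR power2_eq_square divide_inverse)
    ultimately have "quad_form A y / (norm y)^2 \<le> quad_form A v" using v_max by metis
    then show ?thesis using False by (simp add: divide_le_eq power2_norm_eq_inner)
  qed (simp add: quad_form_def)
  with v have "A *v v = quad_form A v *\<^sub>R v"
    by (intro rayleigh_maximizer_is_eigenvector[OF sym S inv]) (auto simp: norm_eq_1)
  with v show ?thesis by auto
qed

lemma symmetric_matrix_orthonormal_eigenbasis: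
  fixes A :: "real^'n^'n"
  assumes sym: "transpose A = A"
  shows "subspace S \<Longrightarrow> (\<And>x. x \<in> S \<Longrightarrow> A *v x \<in> S) \<Longrightarrow>
    \<exists>B. B \<subseteq> S \<and> pairwise orthogonal B \<and> S \<subseteq> span B \<and>
      (\<forall>v\<in>B. norm v = 1 \<and> A *v v = quad_form A v *\<^sub>R v)"
proof (induction "dim S" arbitrary: S rule: less_induct)
  case less
  show ?case
  proof (cases "S = {0}")
    case True
    then show ?thesis by (intro exI[of _ "{}"]) auto
  next
    case False
    obtain v where v: "v \<in> S" "v \<bullet> v = 1" "A *v v = quad_form A v *\<^sub>R v"
      using symmetric_matrix_eigenvector_in_subspace[OF sym less.prems False] by (auto simp: norm_eq_1)
    define S' where "S' = S \<inter> {x. v \<bullet> x = 0}"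
    have S': "subspace S'" unfolding S'_def by (intro subspace_inter less.prems subspace_hyperplane)
    have invariant: "A *v x \<in> S'" if "x \<in> S'" for x
    proof -
      have "v \<bullet> (A *v x) = quad_form A v * (v \<bullet> x)"
        using symmetric_matrix_inner_commute[OF sym, of v x] v(3) by simp
      with that less.prems(2) show ?thesis by (simp add: S'_def)
    qed
    have "v \<notin> S'" using v(2) by (simp add: S'_def)
    then have "S' \<subset> S" using v(1) unfolding S'_def by blast
    then have "dim S' < dim S" using S' less.prems(1) by (metis dim_psubset span_eq_iff)
    then obtain B' where B': "B' \<subseteq> S'" "pairwise orthogonal B'" "S' \<subseteq> span B'"
        "\<forall>w\<in>B'. norm w = 1 \<and> A *v w = quad_form A w *\<^sub>R w"
      using less.hyps[OF _ S' invariant] by blast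
    show ?thesis
    proof (intro exI[of _ "insert v B'"] conjI)
      show "insert v B' \<subseteq> S" using v(1) B'(1) by (auto simp: S'_def)
      show "pairwise orthogonal (insert v B')"
        using B'(1,2) by (auto simp: pairwise_insert orthogonal_def S'_def inner_commute)
      show "S \<subseteq> span (insert v B')"
      proof
        fix x assume "x \<in> S"
        then have "x - (v \<bullet> x) *\<^sub>R v \<in> S'"
          using v less.prems(1) by (simp add: S'_def subspace_diff subspace_scale inner_diff_right)
        then show "x \<in> span (insert v B')" using B'(3) by (auto simp: span_breakdown_eq)
      qed
      show "\<forall>w\<in>insert v B'. norm w = 1 \<and> A *v w = quad_form A w *\<^sub>R w"
        using v B'(4) by (simp add: norm_eq_1)
    qed
  qed
qed

definition orth_diag :: "real^'n^'n \<Rightarrow> real^'n \<Rightarrow> real^'n^'n" where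
  "orth_diag Q l = Q ** diag_mat l ** transpose Q"

lemma diag_mat_mult_vector: "diag_mat l *v y = (\<chi> i. l $ i * y $ i)"
  by (simp add: diag_mat_def matrix_vector_mult_def vec_eq_iff if_distrib[of "\<lambda>x. x * _"] cong: if_cong)

lemma diag_mat_mult: "diag_mat a ** diag_mat b = diag_mat (\<chi> i. a $ i * b $ i)"
  by (simp add: diag_mat_def matrix_matrix_mult_def vec_eq_iff if_distrib[of "\<lambda>x. x * _"]
      if_distrib[of "(*) _"] cong: if_cong)

lemma transpose_diag_mat: "transpose (diag_mat l) = diag_mat l"
  by (simp add: diag_mat_def transpose_def vec_eq_iff)

lemma diag_mat_one: "diag_mat (\<chi> i. 1) = mat 1"
  by (simp add: diag_mat_def mat_def vec_eq_iff)

lemma diag_mat_scaleR: "diag_mat (c *\<^sub>R l) = c *\<^sub>R diag_mat l"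
  by (simp add: diag_mat_def vec_eq_iff)

lemma quad_form_diag_mat: "quad_form (diag_mat l) y = (\<Sum>i\<in>UNIV. l $ i * (y $ i)^2)"
  by (simp add: quad_form_def diag_mat_mult_vector inner_vec_def power2_eq_square algebra_simps)

lemma symmetric_matrix_orthogonal_diagonalization:
  fixes A :: "real^'n^'n"
  assumes sym: "transpose A = A"
  shows "\<exists>Q l. orthogonal_matrix Q \<and> A = orth_diag Q l"
proof -
  obtain B where B: "pairwise orthogonal B" "UNIV \<subseteq> span B"
      "\<forall>v\<in>B. norm v = 1 \<and> A *v v = quad_form A v *\<^sub>R v"
    using symmetric_matrix_orthonormal_eigenbasis[OF sym subspace_UNIV] by blast
  have "independent B" using B(1,3) by (intro pairwise_orthogonal_independent) auto
  then have "finite B" "card B = CARD('n)"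
    using basis_card_eq_dim[OF _ B(2)] finiteI_independent by auto
  then obtain f where f: "bij_betw f (UNIV :: 'n set) B"
    using finite_same_card_bij[of "UNIV :: 'n set" B] by auto
  define Q where "Q = (\<chi> i j. f j $ i)"
  define l where "l = (\<chi> j. quad_form A (f j))"
  have column: "column j Q = f j" for j by (simp add: Q_def column_def vec_eq_iff)
  have f_B: "f j \<in> B" for j using f by (auto simp: bij_betw_def)
  have Q: "orthogonal_matrix Q"
    unfolding orthogonal_matrix_orthonormal_columns column
    using B(1,3) f_B f by (auto simp: pairwise_def bij_betw_def inj_eq)
  have "A ** Q = Q ** diag_mat l"
  proof -
    have "(A ** Q) $ i $ j = (A *v f j) $ i" for i j
      by (simp add: Q_def matrix_matrix_mult_def matrix_vector_mult_def)
    moreover have "A *v f j = l $ j *\<^sub>R f j" for j using B(3) f_B by (simp add: l_def)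
    ultimately show ?thesis
      by (simp add: vec_eq_iff Q_def matrix_matrix_mult_def diag_mat_def mult.commute
          if_distrib[of "(*) _"] cong: if_cong)
  qed
  then have "A = orth_diag Q l"
    using Q by (metis matrix_mul_assoc matrix_mul_rid orth_diag_def orthogonal_matrix_def)
  with Q show ?thesis by blast
qed

section \<open>Orthogonally diagonalized matrices\<close>

lemma transpose_orth_diag: "transpose (orth_diag Q l) = orth_diag Q l"
  by (simp add: orth_diag_def matrix_transpose_mul transpose_diag_mat matrix_mul_assoc)

lemma orth_diag_scaleR: "c *\<^sub>R orth_diag Q l = orth_diag Q (c *\<^sub>R l)"
  by (simp add: orth_diag_def diag_mat_scaleR scalar_matrix_assoc matrix_scalar_ac)

lemma orth_diag_mult:
  assumes "orthogonal_matrix Q"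
  shows "orth_diag Q a ** orth_diag Q b = orth_diag Q (\<chi> i. a $ i * b $ i)"
proof -
  have "orth_diag Q a ** orth_diag Q b = Q ** diag_mat a ** (transpose Q ** Q) ** diag_mat b ** transpose Q"
    by (simp add: orth_diag_def matrix_mul_assoc)
  also have "\<dots> = Q ** (diag_mat a ** diag_mat b) ** transpose Q"
    using assms by (simp add: orthogonal_matrix_def matrix_mul_assoc)
  finally show ?thesis by (simp add: diag_mat_mult orth_diag_def)
qed

lemma quad_form_orth_diag:
  "quad_form (orth_diag Q l) x = (\<Sum>i\<in>UNIV. l $ i * ((transpose Q *v x) $ i)^2)"
  by (simp add: orth_diag_def quad_form_conj quad_form_diag_mat)

lemma quad_form_orth_diag_nonneg: "(\<And>i. 0 \<le> l $ i) \<Longrightarrow> 0 \<le> quad_form (orth_diag Q l) x"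
  by (simp add: quad_form_orth_diag sum_nonneg)

lemma orthogonal_matrix_transpose_mult_column:
  fixes Q :: "real^'n^'n"
  assumes "orthogonal_matrix Q"
  shows "transpose Q *v column i Q = axis i 1"
proof -
  have "transpose Q *v column i Q = (transpose Q ** Q) *v axis i 1"
    by (simp only: matrix_vector_mult_basis[symmetric] matrix_vector_mul_assoc)
  with assms show ?thesis by (simp add: orthogonal_matrix_def)
qed

lemma orthogonal_matrix_column_neq_0:
  fixes Q :: "real^'n^'n"
  shows "orthogonal_matrix Q \<Longrightarrow> column i Q \<noteq> 0"
  by (metis norm_zero orthogonal_matrix_orthonormal_columns zero_neq_one)

lemma orth_diag_mult_column:
  assumes "orthogonal_matrix Q"
  shows "orth_diag Q l *v column i Q = l $ i *\<^sub>R column i Q"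
proof -
  have "orth_diag Q l *v column i Q = Q *v (diag_mat l *v (transpose Q *v column i Q))"
    by (simp only: orth_diag_def matrix_vector_mul_assoc matrix_mul_assoc)
  also have "\<dots> = Q *v (diag_mat l *v axis i 1)"
    using assms by (simp only: orthogonal_matrix_transpose_mult_column)
  also have "\<dots> = Q *v (l $ i *\<^sub>R axis i 1)"
    by (rule arg_cong[where f = "(*v) Q"]) (simp add: diag_mat_mult_vector axis_def vec_eq_iff)
  also have "\<dots> = l $ i *\<^sub>R column i Q"
    by (simp only: matrix_vector_mult_scaleR matrix_vector_mult_basis)
  finally show ?thesis .
qed

lemma quad_form_orth_diag_column:
  assumes "orthogonal_matrix Q"
  shows "quad_form (orth_diag Q l) (column i Q) = l $ i"
proof -
  have "column i Q \<bullet> column i Q = 1"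
    using assms by (simp add: orthogonal_matrix_orthonormal_columns norm_eq_1)
  then show ?thesis using assms by (simp add: quad_form_def orth_diag_mult_column)
qed

lemma matrix_inv_eqI:
  fixes A :: "'a::semiring_1^'n^'m"
  assumes "A ** B = mat 1" "B ** A = mat 1"
  shows "matrix_inv A = B"
proof -
  have "matrix_inv A ** A = mat 1"
    unfolding matrix_inv_def by (rule conjunct2, rule someI_ex) (use assms in blast)
  have "matrix_inv A = matrix_inv A ** (A ** B)" using assms(1) by simp
  also have "\<dots> = (matrix_inv A ** A) ** B" by (simp add: matrix_mul_assoc)
  also have "\<dots> = B" using \<open>matrix_inv A ** A = mat 1\<close> by simp
  finally show ?thesis .
qed

lemma matrix_inv_orth_diag:
  assumes "orthogonal_matrix Q" and "\<And>i. l $ i \<noteq> 0"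
  shows "matrix_inv (orth_diag Q l) = orth_diag Q (\<chi> i. 1 / l $ i)"
proof (rule matrix_inv_eqI)
  have "orth_diag Q (\<chi> i. 1) = mat 1"
    using assms(1) by (simp add: orth_diag_def diag_mat_one orthogonal_matrix_def)
  then show "orth_diag Q l ** orth_diag Q (\<chi> i. 1 / l $ i) = mat 1"
    and "orth_diag Q (\<chi> i. 1 / l $ i) ** orth_diag Q l = mat 1"
    using assms by (simp_all add: orth_diag_mult)
qed

lemma trace_mult_orth_diag:
  "trace (A ** orth_diag Q d) = (\<Sum>i\<in>UNIV. quad_form A (column i Q) * d $ i)"
proof -
  have "trace (A ** orth_diag Q d) = trace (transpose Q ** A ** Q ** diag_mat d)"
    using trace_mul_sym[of "A ** Q ** diag_mat d" "transpose Q"]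
    by (simp add: orth_diag_def matrix_mul_assoc)
  also have "\<dots> = (\<Sum>i\<in>UNIV. (transpose Q ** A ** Q) $ i $ i * d $ i)"
    by (simp add: trace_def matrix_matrix_mult_def diag_mat_def if_distrib[of "(*) _"] cong: if_cong)
  also have "\<dots> = (\<Sum>i\<in>UNIV. quad_form A (column i Q) * d $ i)"
    using quad_form_conj[of "transpose Q" A "axis _ 1"]
    by (simp add: quad_form_axis[symmetric] matrix_vector_mult_basis)
  finally show ?thesis .
qed

lemma pos_def_quad_form_pos: "pos_def A \<Longrightarrow> x \<noteq> 0 \<Longrightarrow> 0 < quad_form A x"
  by (simp add: pos_def_def quad_form_def)

lemma pos_def_quad_form_nonneg: "pos_def A \<Longrightarrow> 0 \<le> quad_form A x"
  by (cases "x = 0") (auto simp: quad_form_def dest: pos_def_quad_form_pos)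

definition vec_powr :: "real^'n \<Rightarrow> real \<Rightarrow> real^'n" where
  "vec_powr l a = (\<chi> i. l $ i powr a)"

lemma pos_def_spectral_decomposition:
  fixes A :: "real^'n^'n"
  assumes pd: "pos_def A"
  shows "\<exists>Q l. orthogonal_matrix Q \<and> (\<forall>i. 0 < l $ i) \<and> A = orth_diag Q l \<and>
    mat_powr A a = orth_diag Q (vec_powr l a)"
proof -
  have "transpose A = A" using pd by (simp add: pos_def_def)
  \<comment> \<open>Working with the decomposition chosen in mat_powr avoids proving that the functional
    calculus does not depend on the decomposition.\<close>
  then have "\<exists>B Q l. orthogonal_matrix Q \<and> A = orth_diag Q l \<and> B = orth_diag Q (vec_powr l a)"
    using symmetric_matrix_orthogonal_diagonalization by blast
  then obtain Q l where Q: "orthogonal_matrix Q" and A: "A = orth_diag Q l"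
      and powr: "mat_powr A a = orth_diag Q (vec_powr l a)"
    using someI_ex[where P = "\<lambda>B. \<exists>Q l. orthogonal_matrix Q \<and> A = orth_diag Q l \<and>
        B = orth_diag Q (vec_powr l a)"]
    by (auto simp: mat_powr_def orth_diag_def vec_powr_def)
  have "0 < l $ i" for i
    using pos_def_quad_form_pos[OF pd orthogonal_matrix_column_neq_0[OF Q]]
    by (simp add: A quad_form_orth_diag_column[OF Q])
  with Q A powr show ?thesis by blast
qed

section \<open>The chained trace inequality\<close>

lemma loewner_le_trace_diag:
  fixes C :: "real^'n^'n"
  assumes sym: "transpose C = C" and psd: "\<And>x. 0 \<le> quad_form C x" and l: "\<And>i. 0 < l $ i"
  shows "loewner_le C ((\<Sum>i\<in>UNIV. C $ i $ i / l $ i) *\<^sub>R diag_mat l)"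
  unfolding loewner_le_def
proof
  fix y
  define a where "a i = C $ i $ i / l $ i" for i
  define b where "b i = l $ i * (y $ i)^2" for i
  have a: "0 \<le> a i" and b: "0 \<le> b i" for i
    using psd[of "axis i 1"] l[of i] by (simp_all add: a_def b_def quad_form_axis)
  \<comment> \<open>AM-GM for a i * b j and a j * b i, whose product is C$i$i * C$j$j * (y$i * y$j)^2.\<close>
  have cross_term: "2 * (C $ i $ j * y $ i * y $ j) \<le> a i * b j + a j * b i" for i j
  proof -
    have "(C $ i $ j)^2 \<le> C $ i $ i * C $ j $ j"
      using quad_form_cauchy_schwarz[OF sym subspace_UNIV, of "axis i 1" "axis j 1"] psd
      by (simp add: inner_axis_matrix_axis quad_form_axis)
    then have "(C $ i $ j)^2 * ((y $ i)^2 * (y $ j)^2) \<le> C $ i $ i * C $ j $ j * ((y $ i)^2 * (y $ j)^2)"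
      by (rule mult_right_mono) simp
    also have "\<dots> = (a i * b j) * (a j * b i)"
      using l[of i] l[of j] by (simp add: a_def b_def field_simps)
    finally have "C $ i $ j * y $ i * y $ j \<le> sqrt ((a i * b j) * (a j * b i))"
      by (intro real_le_rsqrt) (simp add: power_mult_distrib mult_ac)
    also have "\<dots> \<le> (a i * b j + a j * b i) / 2"
      using a b by (intro arith_geo_mean_sqrt) simp_all
    finally show ?thesis by simp
  qed
  have "2 * quad_form C y = (\<Sum>i\<in>UNIV. \<Sum>j\<in>UNIV. 2 * (C $ i $ j * y $ i * y $ j))"
    by (simp add: quad_form_double_sum sum_distrib_left)
  also have "\<dots> \<le> (\<Sum>i\<in>UNIV. \<Sum>j\<in>UNIV. a i * b j + a j * b i)"
    by (intro sum_mono cross_term)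
  also have "\<dots> = 2 * (sum a UNIV * sum b UNIV)"
    using sum.swap[of "\<lambda>i j. a j * b i" UNIV UNIV] by (simp add: sum.distrib sum_product)
  finally show "quad_form C y \<le> quad_form ((\<Sum>i\<in>UNIV. C $ i $ i / l $ i) *\<^sub>R diag_mat l) y"
    by (simp add: quad_form_scaleR quad_form_diag_mat a_def b_def)
qed

lemma loewner_le_trace_mult_inv:
  fixes A B :: "real^'n^'n"
  assumes A: "pos_def A" and B: "pos_def B"
  shows "0 < trace (A ** matrix_inv B)" and "loewner_le A (trace (A ** matrix_inv B) *\<^sub>R B)"
proof -
  obtain Q l where Q: "orthogonal_matrix Q" and l: "\<forall>i. 0 < l $ i" and B_eq: "B = orth_diag Q l"
    using pos_def_spectral_decomposition[OF B] by blast
  define C where "C = transpose Q ** A ** Q"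
  have quad_C: "quad_form C x = quad_form A (Q *v x)" for x
    using quad_form_conj[of "transpose Q" A x] by (simp add: C_def)
  have C_diag: "C $ i $ i = quad_form A (column i Q)" for i
    using quad_C[of "axis i 1"] by (simp add: quad_form_axis matrix_vector_mult_basis)
  have "l $ i \<noteq> 0" for i using l by (metis less_irrefl)
  then have "matrix_inv B = orth_diag Q (\<chi> i. 1 / l $ i)"
    unfolding B_eq by (rule matrix_inv_orth_diag[OF Q])
  then have trace: "trace (A ** matrix_inv B) = (\<Sum>i\<in>UNIV. C $ i $ i / l $ i)"
    by (simp add: trace_mult_orth_diag C_diag)
  show "0 < trace (A ** matrix_inv B)"
    unfolding trace C_diag using l pos_def_quad_form_pos[OF A] orthogonal_matrix_column_neq_0[OF Q]
    by (intro sum_pos) auto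
  have "transpose C = C"
    using A by (simp add: C_def pos_def_def matrix_transpose_mul matrix_mul_assoc)
  then have le_C: "loewner_le C (trace (A ** matrix_inv B) *\<^sub>R diag_mat l)"
    unfolding trace using l by (intro loewner_le_trace_diag) (auto simp: quad_C pos_def_quad_form_nonneg[OF A])
  have "Q ** C ** transpose Q = (Q ** transpose Q) ** A ** (Q ** transpose Q)"
    by (simp add: C_def matrix_mul_assoc)
  then have A_eq: "Q ** C ** transpose Q = A" using Q by (simp add: orthogonal_matrix_def)
  have B_scaled: "Q ** (c *\<^sub>R diag_mat l) ** transpose Q = c *\<^sub>R B" for c
    by (simp add: B_eq orth_diag_def scalar_matrix_assoc matrix_scalar_ac)
  show "loewner_le A (trace (A ** matrix_inv B) *\<^sub>R B)"
    using loewner_le_conj[OF le_C, of Q] by (simp only: A_eq B_scaled)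
qed

lemma loewner_le_chain:
  fixes A :: "nat \<Rightarrow> real^'n^'n"
  assumes pd: "\<forall>i\<in>{1..m}. pos_def (A i)"
  shows "n < m \<Longrightarrow> loewner_le (A 1) ((\<Prod>i=1..n. trace (A i ** matrix_inv (A (i + 1)))) *\<^sub>R A (Suc n))"
proof (induction n)
  case 0
  show ?case by (simp add: loewner_le_refl)
next
  case (Suc n)
  define P where "P = (\<Prod>i=1..n. trace (A i ** matrix_inv (A (i + 1))))"
  define t where "t = trace (A (Suc n) ** matrix_inv (A (Suc n + 1)))"
  have "0 \<le> trace (A i ** matrix_inv (A (i + 1)))" if "i \<in> {1..n}" for i
    using that Suc.prems pd by (intro less_imp_le loewner_le_trace_mult_inv(1)) auto
  then have "0 \<le> P" unfolding P_def by (rule prod_nonneg)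
  have "loewner_le (A 1) (P *\<^sub>R A (Suc n))" using Suc by (simp add: P_def)
  also have "loewner_le (P *\<^sub>R A (Suc n)) (P *\<^sub>R (t *\<^sub>R A (Suc n + 1)))"
  proof (rule loewner_le_scaleR[OF \<open>0 \<le> P\<close>])
    show "loewner_le (A (Suc n)) (t *\<^sub>R A (Suc n + 1))"
      unfolding t_def using Suc.prems pd by (intro loewner_le_trace_mult_inv(2)) auto
  qed
  finally show ?case by (simp add: P_def t_def)
qed

section \<open>Monotonicity of dyadic matrix powers\<close>

lemma loewner_le_of_squares:
  fixes X Y :: "real^'n^'n"
  assumes sym_X: "transpose X = X" and sym_Y: "transpose Y = Y"
    and psd_Y: "\<And>x. 0 \<le> quad_form Y x" and squares: "loewner_le (X ** X) (Y ** Y)"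
  shows "loewner_le X Y"
proof -
  have "transpose (X - Y) = X - Y" using sym_X sym_Y by (simp add: transpose_def vec_eq_iff)
  then obtain Q l where Q: "orthogonal_matrix Q" and Z: "X - Y = orth_diag Q l"
    using symmetric_matrix_orthogonal_diagonalization by blast
  \<comment> \<open>An eigenvector v of X - Y with eigenvalue l > 0 would give
    norm (X v)^2 = norm (Y v)^2 + 2 l v.(Y v) + l^2 > norm (Y v)^2.\<close>
  have "l $ i \<le> 0" for i
  proof (rule ccontr)
    assume "\<not> l $ i \<le> 0"
    define v where "v = column i Q"
    have "v \<bullet> v = 1" using Q by (simp add: v_def orthogonal_matrix_orthonormal_columns norm_eq_1)
    have "(X - Y) *v v = l $ i *\<^sub>R v" unfolding Z v_def by (rule orth_diag_mult_column[OF Q])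
    then have Xv: "X *v v = Y *v v + l $ i *\<^sub>R v" by (simp add: algebra_simps)
    have "(X *v v) \<bullet> (X *v v) = (Y *v v) \<bullet> (Y *v v) + 2 * l $ i * quad_form Y v + (l $ i)^2"
    proof -
      have "(Y *v v) \<bullet> v = v \<bullet> (Y *v v)" by (rule inner_commute)
      with \<open>v \<bullet> v = 1\<close> show ?thesis
        by (simp add: Xv quad_form_def inner_add_left inner_add_right power2_eq_square distrib_left)
    qed
    moreover have "(X *v v) \<bullet> (X *v v) \<le> (Y *v v) \<bullet> (Y *v v)"
      using squares by (simp add: loewner_le_def quad_form_symmetric_square sym_X sym_Y)
    moreover have "0 \<le> l $ i * quad_form Y v" using \<open>\<not> l $ i \<le> 0\<close> psd_Y by simp
    moreover have "0 < (l $ i)^2" using \<open>\<not> l $ i \<le> 0\<close> by simp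
    ultimately show False by linarith
  qed
  then have "quad_form (X - Y) x \<le> 0" for x
    by (simp add: Z quad_form_orth_diag sum_nonpos mult_nonpos_nonneg)
  then show ?thesis by (simp add: loewner_le_def quad_form_diff)
qed

lemma vec_powr_one: "(\<And>i. 0 \<le> l $ i) \<Longrightarrow> vec_powr l 1 = l"
  by (simp add: vec_powr_def vec_eq_iff)

lemma vec_powr_scaleR:
  "0 \<le> c \<Longrightarrow> (\<And>i. 0 \<le> l $ i) \<Longrightarrow> vec_powr (c *\<^sub>R l) a = c powr a *\<^sub>R vec_powr l a"
  by (simp add: vec_powr_def vec_eq_iff powr_mult)

lemma orth_diag_vec_powr_half_square:
  "orthogonal_matrix Q \<Longrightarrow>
    orth_diag Q (vec_powr l (a / 2)) ** orth_diag Q (vec_powr l (a / 2)) = orth_diag Q (vec_powr l a)"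
  by (simp add: orth_diag_mult vec_powr_def powr_add[symmetric])

lemma loewner_le_orth_diag_powr_half_pow:
  fixes Q1 Q2 :: "real^'n^'n"
  assumes Q1: "orthogonal_matrix Q1" and Q2: "orthogonal_matrix Q2"
    and l1: "\<And>i. 0 \<le> l1 $ i" and l2: "\<And>i. 0 \<le> l2 $ i"
    and le: "loewner_le (orth_diag Q1 l1) (orth_diag Q2 l2)"
  shows "loewner_le (orth_diag Q1 (vec_powr l1 ((1/2)^k))) (orth_diag Q2 (vec_powr l2 ((1/2)^k)))"
proof (induction k)
  case 0
  show ?case using le by (simp add: vec_powr_one l1 l2)
next
  case (Suc k)
  have half: "(1/2 :: real)^Suc k = (1/2)^k / 2" by simp
  show ?case
    unfolding half
  proof (rule loewner_le_of_squares)
    show "loewner_le (orth_diag Q1 (vec_powr l1 ((1/2)^k / 2)) ** orth_diag Q1 (vec_powr l1 ((1/2)^k / 2)))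
        (orth_diag Q2 (vec_powr l2 ((1/2)^k / 2)) ** orth_diag Q2 (vec_powr l2 ((1/2)^k / 2)))"
      using Suc.IH by (simp only: orth_diag_vec_powr_half_square[OF Q1] orth_diag_vec_powr_half_square[OF Q2])
    show "0 \<le> quad_form (orth_diag Q2 (vec_powr l2 ((1/2)^k / 2))) x" for x
      by (rule quad_form_orth_diag_nonneg) (simp add: vec_powr_def)
  qed (rule transpose_orth_diag)+
qed

lemma trace_mult_inv_le_of_loewner_le:
  fixes X Q :: "real^'n^'n"
  assumes Q: "orthogonal_matrix Q" and mu: "\<And>i. 0 < mu $ i"
    and le: "loewner_le X (s *\<^sub>R orth_diag Q mu)"
  shows "trace (X ** matrix_inv (orth_diag Q mu)) \<le> s * CARD('n)"
proof -
  have "matrix_inv (orth_diag Q mu) = orth_diag Q (\<chi> i. 1 / mu $ i)"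
    using mu by (intro matrix_inv_orth_diag[OF Q]) (metis less_irrefl)
  then have "trace (X ** matrix_inv (orth_diag Q mu)) = (\<Sum>i\<in>UNIV. quad_form X (column i Q) / mu $ i)"
    by (simp add: trace_mult_orth_diag)
  also have "\<dots> \<le> (\<Sum>i\<in>(UNIV :: 'n set). s)"
  proof (rule sum_mono)
    fix i
    have "quad_form X (column i Q) \<le> s * mu $ i"
      using le quad_form_orth_diag_column[OF Q, of mu i] unfolding loewner_le_def quad_form_scaleR by metis
    then show "quad_form X (column i Q) / mu $ i \<le> s" using mu[of i] by (simp add: divide_le_eq)
  qed
  finally show ?thesis by (simp add: mult.commute)
qed

lemma orth_diag_vec_powr_uminus:
  assumes "orthogonal_matrix Q" and "\<And>i. 0 < l $ i"
  shows "orth_diag Q (vec_powr l (- a)) = matrix_inv (orth_diag Q (vec_powr l a))"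
proof -
  have "vec_powr l a $ i \<noteq> 0" for i using assms(2)[of i] by (simp add: vec_powr_def)
  then show ?thesis by (simp add: matrix_inv_orth_diag[OF assms(1)] vec_powr_def powr_minus_divide)
qed

lemma trace_mat_powr_mult_le_of_loewner_le:
  fixes A B :: "real^'n^'n"
  assumes A: "pos_def A" and B: "pos_def B" and T: "0 \<le> T" and le: "loewner_le A (T *\<^sub>R B)"
  shows "trace (mat_powr A ((1/2)^k) ** mat_powr B (- ((1/2)^k))) \<le> T powr ((1/2)^k) * CARD('n)"
proof -
  define a :: real where "a = (1/2)^k"
  obtain Q1 l1 where Q1: "orthogonal_matrix Q1" "\<forall>i. 0 < l1 $ i" "A = orth_diag Q1 l1"
      "mat_powr A a = orth_diag Q1 (vec_powr l1 a)"
    using pos_def_spectral_decomposition[OF A] by blast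
  obtain Q2 l2 where Q2: "orthogonal_matrix Q2" "\<forall>i. 0 < l2 $ i" "B = orth_diag Q2 l2"
      "mat_powr B (- a) = orth_diag Q2 (vec_powr l2 (- a))"
    using pos_def_spectral_decomposition[OF B] by blast
  have l1: "0 \<le> l1 $ i" and l2: "0 < l2 $ i" "0 \<le> l2 $ i" "l2 $ i \<noteq> 0" for i
    using Q1(2)[rule_format, of i] Q2(2)[rule_format, of i] by auto
  have "loewner_le (orth_diag Q1 l1) (orth_diag Q2 (T *\<^sub>R l2))"
    using le by (simp only: Q1(3) Q2(3) orth_diag_scaleR)
  then have "loewner_le (mat_powr A a) (orth_diag Q2 (vec_powr (T *\<^sub>R l2) a))"
    unfolding Q1(4) unfolding a_def using T l2(2)
    by (intro loewner_le_orth_diag_powr_half_pow[OF Q1(1) Q2(1) l1]) simp_all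
  also have "orth_diag Q2 (vec_powr (T *\<^sub>R l2) a) = T powr a *\<^sub>R orth_diag Q2 (vec_powr l2 a)"
    by (simp add: vec_powr_scaleR[OF T l2(2)] orth_diag_scaleR)
  finally have "trace (mat_powr A a ** matrix_inv (orth_diag Q2 (vec_powr l2 a))) \<le> T powr a * CARD('n)"
    by (intro trace_mult_inv_le_of_loewner_le[OF Q2(1)]) (simp_all add: vec_powr_def l2(3))
  then show ?thesis
    unfolding a_def[symmetric] Q2(4) orth_diag_vec_powr_uminus[OF Q2(1) l2(1)] .
qed

lemma prod_powr_le_one_plus_sum:
  fixes t :: "'a \<Rightarrow> real"
  assumes I: "finite I" and t: "\<And>i. i \<in> I \<Longrightarrow> 0 \<le> t i" and a: "0 \<le> a" "real (card I) * a \<le> 1"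
  shows "(\<Prod>i\<in>I. t i) powr a \<le> 1 + (\<Sum>i\<in>I. t i)"
proof -
  define M where "M = 1 + (\<Sum>i\<in>I. t i)"
  have "1 \<le> M" using t by (simp add: M_def sum_nonneg)
  have "t i \<le> M" if "i \<in> I" for i
    using member_le_sum[of i I t] that t I by (simp add: M_def)
  then have "(\<Prod>i\<in>I. t i) \<le> (\<Prod>i\<in>I. M)" using t by (intro prod_mono) auto
  then have "(\<Prod>i\<in>I. t i) powr a \<le> (M ^ card I) powr a"
    using t a by (intro powr_mono2) (auto simp: prod_nonneg)
  also have "\<dots> = M powr (real (card I) * a)"
    using \<open>1 \<le> M\<close> by (simp add: powr_realpow[symmetric] powr_powr)
  also have "\<dots> \<le> M powr 1" using \<open>1 \<le> M\<close> a by (intro powr_mono) auto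
  finally show ?thesis using \<open>1 \<le> M\<close> by (simp add: M_def)
qed

theorem lemmaC2:
  fixes m :: nat
  assumes "m \<ge> 2"
  shows "\<exists>\<alpha> c d :: real. \<alpha> > 0 \<and> c > 0 \<and> d \<ge> 0 \<and>
    (\<forall>A :: nat \<Rightarrow> real^'n^'n. (\<forall>i\<in>{1..m}. pos_def (A i)) \<longrightarrow>
      (\<Sum>i=1..m-1. trace (A i ** matrix_inv (A (i+1))))
        \<ge> c * trace (mat_powr (A 1) \<alpha> ** mat_powr (A m) (-\<alpha>)) - d)"
proof (intro exI conjI allI impI)
  define \<alpha> :: real where "\<alpha> = (1/2)^m"
  show "0 < \<alpha>" "0 < 1 / real CARD('n)" "(0::real) \<le> 1" by (simp_all add: \<alpha>_def)
  fix A :: "nat \<Rightarrow> real^'n^'n"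
  assume pd: "\<forall>i\<in>{1..m}. pos_def (A i)"
  define t where "t i = trace (A i ** matrix_inv (A (i + 1)))" for i
  define T where "T = (\<Prod>i=1..m-1. t i)"
  have t: "0 \<le> t i" if "i \<in> {1..m-1}" for i
    unfolding t_def using that pd by (intro less_imp_le loewner_le_trace_mult_inv(1)) auto
  then have "0 \<le> T" unfolding T_def by (rule prod_nonneg)
  have "loewner_le (A 1) (T *\<^sub>R A m)"
    using loewner_le_chain[OF pd, of "m - 1"] assms by (simp add: T_def t_def)
  then have "trace (mat_powr (A 1) \<alpha> ** mat_powr (A m) (-\<alpha>)) \<le> T powr \<alpha> * CARD('n)"
    unfolding \<alpha>_def using pd assms \<open>0 \<le> T\<close> by (intro trace_mat_powr_mult_le_of_loewner_le) auto
  moreover have "T powr \<alpha> \<le> 1 + (\<Sum>i=1..m-1. t i)"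
  proof -
    have "m - 1 < 2 ^ m" using less_exp[of m] by linarith
    then have "real (m - 1) * \<alpha> \<le> 1"
      using of_nat_less_iff[of "m - 1" "2 ^ m", where 'a = real] by (simp add: \<alpha>_def field_simps)
    with t show ?thesis unfolding T_def by (intro prod_powr_le_one_plus_sum) (auto simp: \<alpha>_def)
  qed
  ultimately have "trace (mat_powr (A 1) \<alpha> ** mat_powr (A m) (-\<alpha>))
      \<le> (1 + (\<Sum>i=1..m-1. t i)) * CARD('n)"
    by (meson mult_right_mono of_nat_0_le_iff order_trans)
  then show "1 / real CARD('n) * trace (mat_powr (A 1) \<alpha> ** mat_powr (A m) (-\<alpha>)) - 1
      \<le> (\<Sum>i=1..m-1. trace (A i ** matrix_inv (A (i+1))))"
    by (simp add: t_def field_simps)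
qed

end
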